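(* Let $\{X_i\mid i\in I\}$ be a family of $T_0$-spaces. If the product space $\prod_{i\in I}X_i$ is a $d^{\ast}$-space, then each $X_i$ is a $d^{\ast}$-space.
   Context: All spaces are $T_0$. The specialization order of a space $X$ is given by $x\le y$ iff $x\in cl(\{y\})$; ${\uparrow}$ is taken with respect to it. A $T_0$-space $X$ is a $d^{\ast}$-space if for every directed $D\subseteq X$ (in the specialization order), every $x\in X$ and every nonempty open $U\subseteq X$, $\bigcap_{d\in D}{\uparrow}d\cap{\uparrow}x\subseteq U$ implies ${\uparrow}d\cap{\uparrow}x\subseteq U$ for some $d\in D$. *)

theory Defs
  imports "HOL-Analysis.Analysis"
begin

definition spec_le :: "'a topology \<Rightarrow> 'a \<Rightarrow> 'a \<Rightarrow> bool" where
  "spec_le X x y \<longleftrightarrow> x \<in> topspace X \<and> y \<in> topspace X \<and> x \<in> X closure_of {y}"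

definition upset :: "'a topology \<Rightarrow> 'a \<Rightarrow> 'a set" where
  "upset X x = {y \<in> topspace X. spec_le X x y}"

definition directed_in :: "'a topology \<Rightarrow> 'a set \<Rightarrow> bool" where
  "directed_in X D \<longleftrightarrow> D \<subseteq> topspace X \<and> D \<noteq> {} \<and>
     (\<forall>a\<in>D. \<forall>b\<in>D. \<exists>c\<in>D. spec_le X a c \<and> spec_le X b c)"

definition dstar_space :: "'a topology \<Rightarrow> bool" where
  "dstar_space X \<longleftrightarrow> t0_space X \<and>
     (\<forall>D x U. directed_in X D \<and> x \<in> topspace X \<and> openin X U \<and> U \<noteq> {} \<and>
        (\<Inter>d\<in>D. upset X d) \<inter> upset X x \<subseteq> U
        \<longrightarrow> (\<exists>d\<in>D. upset X d \<inter> upset X x \<subseteq> U))"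

end

(* Every factor X k of a product of nonempty spaces is a retract of the product via the projection,
   and the d*-property passes to retracts. Continuous maps preserve the specialization order, so for
   a retraction r with section s the data (D, x, U) in X k become (s ` D, s x, r -` U) in the
   product; the d found there also works in X k because r \<circ> s is the identity. *)
theory Submission
  imports Defs
begin

lemma spec_le_continuous_map:
  assumes "continuous_map X Y f" "spec_le X x y"
  shows "spec_le Y (f x) (f y)"
proof -
  have "f ` (X closure_of {y}) \<subseteq> Y closure_of {f y}"
    using continuous_map_image_closure_subset[OF assms(1), of "{y}"] by simp
  then show ?thesis
    using assms continuous_map_image_subset_topspace unfolding spec_le_def by blast
qed

lemma upset_subset_topspace: "upset X x \<subseteq> topspace X"
  unfolding upset_def by (rule Collect_restrict)

lemma upset_continuous_map:
  assumes "continuous_map X Y f"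
  shows "f ` upset X x \<subseteq> upset Y (f x)"
proof
  fix z assume "z \<in> f ` upset X x"
  then obtain y where "spec_le X x y" "z = f y"
    unfolding upset_def by auto
  then have "spec_le Y (f x) z"
    using spec_le_continuous_map[OF assms] by simp
  then show "z \<in> upset Y (f x)"
    unfolding upset_def spec_le_def by simp
qed

lemma directed_in_continuous_map_image:
  assumes "continuous_map X Y f" "directed_in X D"
  shows "directed_in Y (f ` D)"
  unfolding directed_in_def
proof (intro conjI ballI)
  show "f ` D \<subseteq> topspace Y" "f ` D \<noteq> {}"
    using assms continuous_map_image_subset_topspace unfolding directed_in_def by blast+
next
  fix a' b' assume "a' \<in> f ` D" "b' \<in> f ` D"
  then obtain a b where ab: "a \<in> D" "b \<in> D" "a' = f a" "b' = f b"
    by auto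
  then obtain c where "c \<in> D" "spec_le X a c" "spec_le X b c"
    using assms(2) ab(1,2) unfolding directed_in_def by blast
  then show "\<exists>c'\<in>f ` D. spec_le Y a' c' \<and> spec_le Y b' c'"
    using ab spec_le_continuous_map[OF assms(1)] by (intro bexI[of _ "f c"]) auto
qed

lemma dstar_space_retraction_map_image:
  assumes "retraction_map X Y r" and dstar: "dstar_space X"
  shows "dstar_space Y"
  unfolding dstar_space_def
proof (intro conjI allI impI)
  obtain s where r: "continuous_map X Y r" and s: "continuous_map Y X s"
    and rs: "\<And>y. y \<in> topspace Y \<Longrightarrow> r (s y) = y"
    using assms(1) unfolding retraction_map_def retraction_maps_def by blast
  have r_upset: "r g \<in> upset Y y" if "g \<in> upset X (s y)" "y \<in> topspace Y" for g y
    using upset_continuous_map[OF r, of "s y"] that rs by (metis image_subset_iff)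
  have s_upset: "s g \<in> upset X (s y)" if "g \<in> upset Y y" for g y
    using upset_continuous_map[OF s, of y] that by (metis image_subset_iff)
  show "t0_space Y"
    using t0_space_retraction_map_image[OF assms(1)] dstar unfolding dstar_space_def by simp
  fix D x U
  assume "directed_in Y D \<and> x \<in> topspace Y \<and> openin Y U \<and> U \<noteq> {} \<and>
      (\<Inter>d\<in>D. upset Y d) \<inter> upset Y x \<subseteq> U"
  then have D: "directed_in Y D" and x: "x \<in> topspace Y" and U: "openin Y U" "U \<noteq> {}"
    and below_U: "(\<Inter>d\<in>D. upset Y d) \<inter> upset Y x \<subseteq> U"
    by auto
  have DY: "D \<subseteq> topspace Y"
    using D unfolding directed_in_def by simp
  define U' where "U' = {g \<in> topspace X. r g \<in> U}"
  have "openin X U'"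
    unfolding U'_def using r U(1) by (rule openin_continuous_map_preimage)
  moreover have "U' \<noteq> {}"
  proof -
    obtain u where u: "u \<in> U" using U(2) by blast
    then have "u \<in> topspace Y"
      using U(1) openin_subset by blast
    then have "s u \<in> U'"
      using u s rs continuous_map_image_subset_topspace unfolding U'_def by fastforce
    then show ?thesis by blast
  qed
  moreover have "(\<Inter>d\<in>s ` D. upset X d) \<inter> upset X (s x) \<subseteq> U'"
  proof
    fix g assume g: "g \<in> (\<Inter>d\<in>s ` D. upset X d) \<inter> upset X (s x)"
    have "r g \<in> upset Y d" if "d \<in> D" for d
      using g that DY r_upset by auto
    moreover have "r g \<in> upset Y x"
      using g x r_upset by auto
    moreover have "g \<in> topspace X"
      using g subsetD[OF upset_subset_topspace] by auto
    ultimately show "g \<in> U'"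
      using below_U unfolding U'_def by auto
  qed
  moreover have "directed_in X (s ` D)"
    using s D by (rule directed_in_continuous_map_image)
  moreover have "s x \<in> topspace X"
    using continuous_map_image_subset_topspace[OF s] x by blast
  ultimately obtain d' where "d' \<in> s ` D" "upset X d' \<inter> upset X (s x) \<subseteq> U'"
    using dstar unfolding dstar_space_def by meson
  then obtain d where d: "d \<in> D" and d_U': "upset X (s d) \<inter> upset X (s x) \<subseteq> U'"
    by auto
  have "upset Y d \<inter> upset Y x \<subseteq> U"
  proof
    fix y assume y: "y \<in> upset Y d \<inter> upset Y x"
    then have "s y \<in> U'"
      using d_U' s_upset by auto
    moreover have "y \<in> topspace Y"
      using y subsetD[OF upset_subset_topspace] by auto
    ultimately show "y \<in> U"
      using rs unfolding U'_def by auto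
  qed
  then show "\<exists>d\<in>D. upset Y d \<inter> upset Y x \<subseteq> U"
    using d by auto
qed

theorem mainTheorem3:
  fixes X :: "'i \<Rightarrow> 'a topology" and I :: "'i set"
  assumes "\<And>i. i \<in> I \<Longrightarrow> t0_space (X i)"
    and "\<And>i. i \<in> I \<Longrightarrow> topspace (X i) \<noteq> {}"
    and "dstar_space (product_topology X I)"
  shows "\<forall>i\<in>I. dstar_space (X i)"
proof
  fix k assume "k \<in> I"
  moreover have "product_topology X I \<noteq> trivial_topology"
    using assms(2) by (metis product_topology_trivial_iff topspace_discrete_topology)
  ultimately have "retraction_map (product_topology X I) (X k) (\<lambda>f. f k)"
    by (simp add: retraction_map_product_projection)
  then show "dstar_space (X k)"
    using assms(3) by (rule dstar_space_retraction_map_image)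
qed

end
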